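(* Let $j\geq 2$ be an integer and let $T$ be a tree of order $n>10j$. If $\mu\neq 1$ is a Laplacian eigenvalue of $T$ with $m_T(\mu)=\lfloor \frac{n}{2}\rfloor - j$, then $\mu=\frac{3\pm\sqrt{5}}{2}$.
   Context: For a graph $G$, the Laplacian matrix is $L(G)=D(G)-A(G)$, with $D(G)$ the diagonal degree matrix and $A(G)$ the adjacency matrix; its eigenvalues are the Laplacian eigenvalues, and $m_G(\mu)$ denotes the multiplicity of $\mu$ as an eigenvalue of $L(G)$. *)

theory Defs
  imports "Jordan_Normal_Form.Char_Poly"
begin

definition simple_graph :: "nat \<Rightarrow> (nat \<Rightarrow> nat \<Rightarrow> bool) \<Rightarrow> bool" where
  "simple_graph n E \<longleftrightarrow>
     (\<forall>u v. E u v \<longrightarrow> u < n \<and> v < n) \<and>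
     (\<forall>u v. E u v \<longrightarrow> E v u) \<and>
     (\<forall>u. \<not> E u u)"

definition connected_graph :: "nat \<Rightarrow> (nat \<Rightarrow> nat \<Rightarrow> bool) \<Rightarrow> bool" where
  "connected_graph n E \<longleftrightarrow> (\<forall>u<n. \<forall>v<n. E\<^sup>*\<^sup>* u v)"

definition has_cycle :: "nat \<Rightarrow> (nat \<Rightarrow> nat \<Rightarrow> bool) \<Rightarrow> bool" where
  "has_cycle n E \<longleftrightarrow> (\<exists>vs. length vs \<ge> 3 \<and> distinct vs \<and> set vs \<subseteq> {0..<n} \<and>
      (\<forall>i. Suc i < length vs \<longrightarrow> E (vs ! i) (vs ! Suc i)) \<and> E (last vs) (hd vs))"

definition is_tree :: "nat \<Rightarrow> (nat \<Rightarrow> nat \<Rightarrow> bool) \<Rightarrow> bool" where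
  "is_tree n E \<longleftrightarrow> simple_graph n E \<and> connected_graph n E \<and> \<not> has_cycle n E"

definition degree :: "nat \<Rightarrow> (nat \<Rightarrow> nat \<Rightarrow> bool) \<Rightarrow> nat \<Rightarrow> nat" where
  "degree n E v = card {w \<in> {0..<n}. E v w}"

definition laplacian :: "nat \<Rightarrow> (nat \<Rightarrow> nat \<Rightarrow> bool) \<Rightarrow> real mat" where
  "laplacian n E = mat n n (\<lambda>(i, j). real (if i = j then degree n E i else 0))
                 - mat n n (\<lambda>(i, j). if E i j then 1 else 0)"

text \<open>Multiplicity of mu as a Laplacian eigenvalue (root multiplicity in the
  characteristic polynomial; equals geometric multiplicity since L is symmetric).\<close>
definition lap_mult :: "nat \<Rightarrow> (nat \<Rightarrow> nat \<Rightarrow> bool) \<Rightarrow> real \<Rightarrow> nat" where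
  "lap_mult n E \<mu> = order \<mu> (char_poly (laplacian n E))"

end

(* Root the tree at vertex 0 and call a non-root vertex light if it is a leaf or its only
   child is a leaf, heavy otherwise. For mu <> 1 with mu^2 - 3 mu + 1 <> 0 the eigen-equations
   of a pendant path with one or two vertices force an eigenvector to vanish on a light vertex
   as soon as it vanishes on its parent. Descending the tree, an eigenvector vanishing on the
   root and on all heavy vertices except one heavy child per vertex therefore vanishes
   everywhere, and such a set of vertices can be chosen with at most 1 + h elements, h being
   the number of heavy vertices without heavy children. Each of these h vertices owns three
   vertices among itself, its children and its grandchildren, disjointly, so 3 h <= n - 1.
   Since the Laplacian is symmetric, the multiplicity of mu is bounded by the dimension of
   its eigenspace, hence by 1 + (n - 1) / 3, which is less than n div 2 - j when n > 10 j and
   j >= 2. Hence mu^2 - 3 mu + 1 = 0. *)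

theory Submission
  imports
    Defs
    Jordan_Normal_Form.Jordan_Normal_Form_Uniqueness
    Jordan_Normal_Form.Jordan_Normal_Form_Existence
    Jordan_Normal_Form.DL_Rank
begin

section \<open>Hermitian matrices\<close>

definition hermitian :: "'a :: conjugatable_ring mat \<Rightarrow> bool" where
  "hermitian C \<longleftrightarrow> (\<forall>i < dim_row C. \<forall>j < dim_col C. C $$ (j, i) = conjugate (C $$ (i, j)))"

lemma hermitianD:
  assumes "hermitian C" "C \<in> carrier_mat n n" "i < n" "j < n"
  shows "C $$ (j, i) = conjugate (C $$ (i, j))"
proof -
  have "i < dim_row C" "j < dim_col C" using assms(2-4) by auto
  with assms(1) show ?thesis unfolding hermitian_def by blast
qed

lemma transpose_mult_vec_conjugate:
  fixes C :: "'a :: conjugatable_field mat"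
  assumes C: "C \<in> carrier_mat n n" and w: "w \<in> carrier_vec n"
    and herm: "hermitian C"
  shows "transpose_mat C *\<^sub>v conjugate w = conjugate (C *\<^sub>v w)"
proof (rule eq_vecI)
  fix i assume "i < dim_vec (conjugate (C *\<^sub>v w))"
  then have i: "i < n" using C by simp
  have "(transpose_mat C *\<^sub>v conjugate w) $ i = (\<Sum>j = 0..<n. C $$ (j, i) * conjugate (w $ j))"
    using C w i by (simp add: scalar_prod_def)
  also have "\<dots> = (\<Sum>j = 0..<n. conjugate (C $$ (i, j) * w $ j))"
    using hermitianD[OF herm C i] by (intro sum.cong) (simp_all add: conjugate_dist_mul)
  also have "\<dots> = conjugate ((C *\<^sub>v w) $ i)"
    using C w i by (simp add: scalar_prod_def sum_conjugate)
  finally show "(transpose_mat C *\<^sub>v conjugate w) $ i = conjugate (C *\<^sub>v w) $ i"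
    using C w i by simp
qed (use C in simp)

lemma hermitian_square_kernel:
  fixes C :: "'a :: conjugatable_ordered_field mat"
  assumes C: "C \<in> carrier_mat n n" and herm: "hermitian C" and v: "v \<in> carrier_vec n"
    and sq: "C *\<^sub>v (C *\<^sub>v v) = 0\<^sub>v n"
  shows "C *\<^sub>v v = 0\<^sub>v n"
proof -
  define w where "w = C *\<^sub>v v"
  have w: "w \<in> carrier_vec n" using C v by (simp add: w_def)
  have "w \<bullet>c w = conjugate w \<bullet> w"
    by (rule comm_scalar_prod[OF w carrier_vec_conjugate[OF w]])
  also have "\<dots> = (transpose_mat C *\<^sub>v conjugate w) \<bullet> v"
    using C v w by (simp add: w_def transpose_vec_mult_scalar)
  also have "\<dots> = 0"
    using C v w sq herm by (simp add: transpose_mult_vec_conjugate w_def)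
  finally show ?thesis using w by (simp add: w_def)
qed

lemma hermitian_pow_mult_vec_eq_0_iff:
  fixes C :: "'a :: conjugatable_ordered_field mat"
  assumes C: "C \<in> carrier_mat n n" and herm: "hermitian C" and v: "v \<in> carrier_vec n"
  shows "C ^\<^sub>m Suc k *\<^sub>v v = 0\<^sub>v n \<longleftrightarrow> C *\<^sub>v v = 0\<^sub>v n"
  using v
proof (induction k arbitrary: v)
  case (Suc k)
  have "C ^\<^sub>m Suc (Suc k) *\<^sub>v v = C ^\<^sub>m Suc k *\<^sub>v (C *\<^sub>v v)"
    using assoc_mult_mat_vec[OF pow_carrier_mat[OF C] C Suc.prems, of "Suc k"]
    by (simp only: pow_mat.simps(2))
  also have "\<dots> = 0\<^sub>v n \<longleftrightarrow> C *\<^sub>v (C *\<^sub>v v) = 0\<^sub>v n"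
    using Suc.IH C Suc.prems by simp
  also have "\<dots> \<longleftrightarrow> C *\<^sub>v v = 0\<^sub>v n"
    using hermitian_square_kernel[OF C herm Suc.prems] C by auto
  finally show ?case .
qed simp

lemma hermitian_kernel_dim_pow:
  fixes C :: "'a :: conjugatable_ordered_field mat"
  assumes C: "C \<in> carrier_mat n n" and herm: "hermitian C"
  shows "kernel_dim (C ^\<^sub>m Suc k) = kernel_dim C"
proof -
  have "mat_kernel (C ^\<^sub>m Suc k) = mat_kernel C"
    using hermitian_pow_mult_vec_eq_0_iff[OF C herm]
    unfolding mat_kernel_def carrier_matD[OF C] carrier_matD[OF pow_carrier_mat[OF C]] by blast
  then show ?thesis using C unfolding kernel_dim_def by (simp del: pow_mat.simps)
qed

text \<open>By the Jordan normal form, the kernel of \<open>C ^ k\<close>, for \<open>C = A - \<mu> I\<close> and \<open>k\<close> the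
  algebraic multiplicity of \<open>\<mu>\<close>, has dimension \<open>k\<close>; for Hermitian \<open>C\<close> it is the kernel of \<open>C\<close>.\<close>

lemma order_char_poly_le_kernel_dim:
  fixes A :: "'a :: conjugatable_ordered_field mat"
  assumes A: "A \<in> carrier_mat n n" and split: "char_poly A = (\<Prod>a \<leftarrow> as. [:- a, 1:])"
    and herm: "hermitian (char_matrix A \<mu>)"
  shows "Polynomial.order \<mu> (char_poly A) \<le> kernel_dim (char_matrix A \<mu>)"
proof (cases "Polynomial.order \<mu> (char_poly A)")
  case (Suc k)
  obtain n_as where jnf: "jordan_nf A n_as" using jordan_nf_exists[OF A split] by blast
  define sizes where "sizes = map fst (filter (\<lambda>na. snd na = \<mu>) n_as)"
  have order: "Polynomial.order \<mu> (char_poly A) = sum_list sizes"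
    unfolding sizes_def by (rule jordan_nf_order[OF jnf])
  have "map fst [(m, e) \<leftarrow> n_as. e = \<mu>] = sizes"
    unfolding sizes_def by (simp add: case_prod_beta')
  moreover have "map (min (sum_list sizes)) sizes = sizes"
    by (rule map_idI) (simp add: member_le_sum_list)
  ultimately have "dim_gen_eigenspace A \<mu> (Polynomial.order \<mu> (char_poly A))
      = Polynomial.order \<mu> (char_poly A)"
    unfolding dim_gen_eigenspace[OF jnf] order by simp
  then show ?thesis
    using hermitian_kernel_dim_pow[OF char_matrix_closed[OF A] herm] Suc
    unfolding dim_gen_eigenspace_def by simp
qed simp

lemma order_char_poly_le_kernel_dim_symmetric:
  fixes A :: "real mat"
  assumes A: "A \<in> carrier_mat n n" and sym: "transpose_mat A = A"
  shows "Polynomial.order \<mu> (char_poly A)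
    \<le> kernel_dim (char_matrix (map_mat complex_of_real A) (of_real \<mu>))"
proof -
  interpret map_poly_inj_idom_divide_hom "of_real :: real \<Rightarrow> complex" ..
  have A': "map_mat complex_of_real A \<in> carrier_mat n n" using A by simp
  obtain as where "char_poly (map_mat complex_of_real A) = (\<Prod>a \<leftarrow> as. [:- a, 1:])"
    using char_poly_factorized[OF A'] by blast
  moreover have "hermitian (char_matrix (map_mat complex_of_real A) (of_real \<mu>))"
    using A sym unfolding hermitian_def char_matrix_def
    by (auto simp: mat_eq_iff[of "transpose_mat A" A])
  ultimately show ?thesis
    using order_char_poly_le_kernel_dim[OF A'] of_real_hom.char_poly_hom[OF A] order_hom by metis
qed

section \<open>Kernels of small support\<close>

text \<open>The rows of \<open>P\<close> indexed by \<open>R\<close>, padded with zero rows, form a singular square matrix.\<close>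

lemma exists_nonzero_vec_vanishing_rows:
  fixes P :: "'a :: field mat"
  assumes P: "P \<in> carrier_mat n d" and R: "R \<subseteq> {0..<n}" and card: "card R < d"
  shows "\<exists>w \<in> carrier_vec d. w \<noteq> 0\<^sub>v d \<and> (\<forall>i \<in> R. (P *\<^sub>v w) $ i = 0)"
proof -
  obtain rs where rs: "set rs = R" "distinct rs"
    using finite_distinct_list[OF finite_subset[OF R finite_atLeastLessThan]] by blast
  have len: "length rs < d" using card distinct_card[OF rs(2)] rs(1) by simp
  define c where "c i = (if i < length rs then row P (rs ! i) else 0\<^sub>v d)" for i
  define M where "M = mat\<^sub>r d d c"
  have M: "M \<in> carrier_mat d d" by (simp add: M_def)
  have c: "c \<in> {0..<d} \<rightarrow> carrier_vec d"
    unfolding c_def by (intro Pi_I) (simp add: row_def carrier_matD[OF P])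
  have "(\<lambda>i. if i = length rs then 0\<^sub>v d else c i) = c" by (auto simp: c_def)
  then have "det M = 0" using det_row_0[OF len c] by (simp add: M_def)
  then obtain w where w: "w \<in> carrier_vec d" "w \<noteq> 0\<^sub>v d" "M *\<^sub>v w = 0\<^sub>v d"
    using det_0_iff_vec_prod_zero_field[OF M] by blast
  have "(P *\<^sub>v w) $ i = 0" if i: "i \<in> R" for i
  proof -
    obtain k where k: "k < length rs" "rs ! k = i" using i rs(1) by (auto simp: in_set_conv_nth)
    have "(P *\<^sub>v w) $ i = row P i \<bullet> w" using P R i by auto
    also have "\<dots> = (M *\<^sub>v w) $ k" using k len P by (simp add: M_def c_def)
    also have "\<dots> = 0" using w(3) k len by simp
    finally show ?thesis .
  qed
  then show ?thesis using w(1,2) by blast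
qed

lemma kernel_dim_le_card:
  fixes B :: "'a :: field mat"
  assumes B: "B \<in> carrier_mat nr n" and R: "R \<subseteq> {0..<n}"
    and vanishing: "\<And>v. v \<in> mat_kernel B \<Longrightarrow> (\<forall>i \<in> R. v $ i = 0) \<Longrightarrow> v = 0\<^sub>v n"
  shows "kernel_dim B \<le> card R"
proof (rule ccontr)
  assume "\<not> kernel_dim B \<le> card R"
  interpret K: kernel nr n B by (unfold_locales, rule B)
  obtain Bs where Bs: "finite Bs" "K.basis Bs" using kernel_basis_exists[OF B] by blast
  have Bs_kernel: "Bs \<subseteq> mat_kernel B" and indep: "\<not> K.NC.lin_dep Bs"
    using Bs K.lindep_same unfolding K.Ker.basis_def by auto
  obtain bs where bs: "set bs = Bs" "distinct bs" using finite_distinct_list[OF Bs(1)] by blast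
  define P where "P = mat_of_cols n bs"
  have bs_carrier: "set bs \<subseteq> carrier_vec n" using Bs_kernel bs B mat_kernel_carrier by blast
  have P: "P \<in> carrier_mat n (length bs)" by (simp add: P_def)
  have cols: "cols P = bs" using bs_carrier by (simp add: P_def)
  have "kernel_dim B = length bs"
    using K.Ker.dim_basis[OF Bs] distinct_card[OF bs(2)] bs(1) by simp
  then have "card R < length bs" using \<open>\<not> kernel_dim B \<le> card R\<close> by simp
  then obtain w where w: "w \<in> carrier_vec (length bs)" "w \<noteq> 0\<^sub>v (length bs)"
    and vanish: "\<forall>i \<in> R. (P *\<^sub>v w) $ i = 0"
    using exists_nonzero_vec_vanishing_rows[OF P R] by blast
  have BP: "B * P = 0\<^sub>m nr (length bs)"
  proof (rule eq_matI)
    fix i j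
    assume ij: "i < dim_row (0\<^sub>m nr (length bs) :: 'a mat)"
      "j < dim_col (0\<^sub>m nr (length bs) :: 'a mat)"
    have "col P j = bs ! j" using cols_nth[of j P] cols P ij by simp
    then have "col P j \<in> mat_kernel B" using ij bs Bs_kernel by auto
    then have "(B *\<^sub>v col P j) $ i = 0" using mat_kernelD[OF B] ij by simp
    then show "(B * P) $$ (i, j) = 0\<^sub>m nr (length bs) $$ (i, j)" using ij B P by simp
  qed (use B P in auto)
  have "B *\<^sub>v (P *\<^sub>v w) = (B * P) *\<^sub>v w" using assoc_mult_mat_vec[OF B P w(1)] by simp
  also have "\<dots> = 0\<^sub>v nr" unfolding BP using w(1) by (intro eq_vecI) (auto simp: scalar_prod_def)
  finally have "B *\<^sub>v (P *\<^sub>v w) = 0\<^sub>v nr" .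
  then have "P *\<^sub>v w = 0\<^sub>v n"
    using vanishing vanish B P w(1) by (simp add: mat_kernelI)
  then have "K.NC.lin_dep Bs"
    using K.NC.lin_depI[OF P w] cols bs by simp
  then show False using indep by contradiction
qed

section \<open>Laplacian eigenfunctions\<close>

definition neighbours :: "nat \<Rightarrow> (nat \<Rightarrow> nat \<Rightarrow> bool) \<Rightarrow> nat \<Rightarrow> nat set" where
  "neighbours n E u = {w \<in> {0..<n}. E u w}"

definition laplacian_eigenfunction ::
    "nat \<Rightarrow> (nat \<Rightarrow> nat \<Rightarrow> bool) \<Rightarrow> 'a :: field \<Rightarrow> (nat \<Rightarrow> 'a) \<Rightarrow> bool" where
  "laplacian_eigenfunction n E \<mu> v \<longleftrightarrow>
     (\<forall>u < n. of_nat (card (neighbours n E u)) * v u - (\<Sum>w \<in> neighbours n E u. v w) = \<mu> * v u)"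

lemma laplacian_carrier: "laplacian n E \<in> carrier_mat n n"
  unfolding laplacian_def by (rule minus_carrier_mat) simp

lemma laplacian_symmetric:
  assumes sym: "\<And>u v. E u v \<Longrightarrow> E v u"
  shows "transpose_mat (laplacian n E) = laplacian n E"
proof -
  have "E u v \<longleftrightarrow> E v u" for u v using sym by blast
  then show ?thesis by (intro eq_matI) (auto simp: laplacian_def)
qed

lemma laplacian_mult_vec:
  fixes v :: "'a :: real_field vec"
  assumes v: "v \<in> carrier_vec n" and u: "u < n"
  shows "(map_mat of_real (laplacian n E) *\<^sub>v v) $ u
    = of_nat (card (neighbours n E u)) * v $ u - (\<Sum>w \<in> neighbours n E u. v $ w)"
proof -
  have "(map_mat of_real (laplacian n E) *\<^sub>v v) $ u
      = (\<Sum>w = 0..<n. of_real (laplacian n E $$ (u, w)) * v $ w)"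
    using v u laplacian_carrier[of n E] by (simp add: scalar_prod_def)
  also have "\<dots> = (\<Sum>w = 0..<n. (if w = u then of_nat (Defs.degree n E u) * v $ w else 0)
      - (if E u w then v $ w else 0))"
    using u by (intro sum.cong) (auto simp: laplacian_def algebra_simps)
  also have "\<dots> = of_nat (card (neighbours n E u)) * v $ u - (\<Sum>w \<in> neighbours n E u. v $ w)"
    using u by (simp add: sum_subtractf sum.If_cases degree_def neighbours_def Int_def conj_commute)
  finally show ?thesis .
qed

lemma laplacian_kernel_eigenfunction:
  fixes \<mu> :: "'a :: real_field"
  assumes v: "v \<in> mat_kernel (char_matrix (map_mat of_real (laplacian n E)) \<mu>)"
  shows "laplacian_eigenfunction n E \<mu> (\<lambda>i. v $ i)"
proof -
  define L where "L = map_mat (of_real :: real \<Rightarrow> 'a) (laplacian n E)"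
  have L: "L \<in> carrier_mat n n" using laplacian_carrier by (simp add: L_def)
  have v_carrier: "v \<in> carrier_vec n" and kernel: "char_matrix L \<mu> *\<^sub>v v = 0\<^sub>v n"
    using v mat_kernelD[OF char_matrix_closed[OF L]] by (auto simp: L_def)
  have "L *\<^sub>v v = \<mu> \<cdot>\<^sub>v v"
  proof (cases "v = 0\<^sub>v n")
    case True
    then show ?thesis using L by (intro eq_vecI) (auto simp: scalar_prod_def)
  next
    case False
    then have "eigenvector L v \<mu>" using eigenvector_char_matrix[OF L] v_carrier kernel by simp
    then show ?thesis unfolding eigenvector_def by simp
  qed
  then have "(L *\<^sub>v v) $ u = \<mu> * v $ u" if "u < n" for u using that v_carrier by simp
  then show ?thesis
    unfolding laplacian_eigenfunction_def
    using laplacian_mult_vec[OF v_carrier] by (simp add: L_def)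
qed

section \<open>Rooted trees\<close>

lemma has_cycleI:
  assumes L: "3 \<le> L" and inj: "inj_on f {0..<L}" and range: "f ` {0..<L} \<subseteq> {0..<n}"
    and path: "\<And>k. Suc k < L \<Longrightarrow> E (f k) (f (Suc k))" and close: "E (f (L - 1)) (f 0)"
  shows "has_cycle n E"
  unfolding has_cycle_def
proof (intro exI conjI allI impI)
  let ?vs = "map f [0..<L]"
  show "3 \<le> length ?vs" "distinct ?vs" "set ?vs \<subseteq> {0..<n}"
    using L inj range by (simp_all add: distinct_map)
  show "E (?vs ! k) (?vs ! Suc k)" if "Suc k < length ?vs" for k
    using path that by simp
  show "E (last ?vs) (hd ?vs)"
    using close L by (simp add: last_map hd_map)
qed

locale rooted_tree =
  fixes n :: nat and E :: "nat \<Rightarrow> nat \<Rightarrow> bool"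
  assumes tree: "is_tree n E" and root_vertex: "0 < n"
begin

lemma edge_less: "E u v \<Longrightarrow> u < n \<and> v < n"
  using tree unfolding is_tree_def simple_graph_def by blast

lemma edge_sym: "E u v \<Longrightarrow> E v u"
  using tree unfolding is_tree_def simple_graph_def by blast

lemma edge_irrefl: "\<not> E u u"
  using tree unfolding is_tree_def simple_graph_def by blast

lemma connected: "u < n \<Longrightarrow> v < n \<Longrightarrow> E\<^sup>*\<^sup>* u v"
  using tree unfolding is_tree_def connected_graph_def by blast

lemma acyclic: "\<not> has_cycle n E"
  using tree unfolding is_tree_def by blast

definition depth :: "nat \<Rightarrow> nat" where
  "depth v = (LEAST k. (E ^^ k) 0 v)"

lemma depth_walk: "v < n \<Longrightarrow> (E ^^ depth v) 0 v"
proof -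
  assume "v < n"
  then obtain k where "(E ^^ k) 0 v"
    using rtranclp_imp_relpowp[OF connected[OF root_vertex]] by blast
  then show ?thesis unfolding depth_def by (rule LeastI)
qed

lemma depth_le: "(E ^^ k) 0 v \<Longrightarrow> depth v \<le> k"
  unfolding depth_def by (rule Least_le)

lemma depth_root [simp]: "depth 0 = 0"
  using depth_le[of 0 0] by simp

lemma depth_eq_0_iff: "v < n \<Longrightarrow> depth v = 0 \<longleftrightarrow> v = 0"
  using depth_walk[of v] by auto

lemma depth_pos_imp_nonzero: "0 < depth v \<Longrightarrow> v \<noteq> 0"
  by (cases "v = 0") simp_all

lemma exists_parent: "v < n \<Longrightarrow> v \<noteq> 0 \<Longrightarrow> \<exists>w. E w v \<and> depth v = Suc (depth w)"
proof -
  assume v: "v < n" "v \<noteq> 0"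
  then obtain k where k: "depth v = Suc k" using depth_eq_0_iff not0_implies_Suc by blast
  then have "(E ^^ Suc k) 0 v" using depth_walk[OF v(1)] by simp
  then obtain w where w: "(E ^^ k) 0 w" "E w v" by (rule relpowp_Suc_E)
  have "(E ^^ Suc (depth w)) 0 v" using relpowp_Suc_I[OF depth_walk w(2)] edge_less[OF w(2)] by simp
  then have "depth v \<le> Suc (depth w)" by (rule depth_le)
  then show ?thesis using depth_le[OF w(1)] k w(2) by (intro exI[of _ w]) simp
qed

definition parent :: "nat \<Rightarrow> nat" where
  "parent v = (SOME w. E w v \<and> depth v = Suc (depth w))"

lemma parent_spec: "v < n \<Longrightarrow> v \<noteq> 0 \<Longrightarrow> E (parent v) v \<and> depth v = Suc (depth (parent v))"
  unfolding parent_def by (rule someI_ex) (rule exists_parent)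

lemma parent_edge: "v < n \<Longrightarrow> v \<noteq> 0 \<Longrightarrow> E (parent v) v"
  using parent_spec by blast

lemma depth_parent: "v < n \<Longrightarrow> v \<noteq> 0 \<Longrightarrow> depth v = Suc (depth (parent v))"
  using parent_spec by blast

lemma parent_less: "v < n \<Longrightarrow> v \<noteq> 0 \<Longrightarrow> parent v < n"
  using parent_edge edge_less by blast

lemma ancestor_depth:
  "v < n \<Longrightarrow> k \<le> depth v \<Longrightarrow> (parent ^^ k) v < n \<and> depth ((parent ^^ k) v) = depth v - k"
proof (induction k)
  case (Suc k)
  define x where "x = (parent ^^ k) v"
  have x: "x < n" "depth x = depth v - k" using Suc by (simp_all add: x_def)
  then have "x \<noteq> 0" using Suc.prems by (intro depth_pos_imp_nonzero) simp
  then show ?case using x depth_parent[of x] parent_less[of x] by (simp add: x_def)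
qed simp

lemma ancestor_edge: "v < n \<Longrightarrow> k < depth v \<Longrightarrow> E ((parent ^^ Suc k) v) ((parent ^^ k) v)"
proof -
  assume "v < n" "k < depth v"
  then have "(parent ^^ k) v < n" "(parent ^^ k) v \<noteq> 0"
    using ancestor_depth[of v k] depth_pos_imp_nonzero[of "(parent ^^ k) v"] by auto
  then show ?thesis using parent_edge by simp
qed

lemma ancestor_root: "v < n \<Longrightarrow> (parent ^^ depth v) v = 0"
  using ancestor_depth[of v "depth v"] depth_eq_0_iff[of "(parent ^^ depth v) v"] by simp

lemma cycle_through_ancestors:
  assumes edge: "E a b" and i: "i \<le> depth a" and j: "j \<le> depth b"
    and meet: "(parent ^^ i) a = (parent ^^ j) b"
    and first: "\<And>i' j'. i' < i \<Longrightarrow> j' \<le> depth b \<Longrightarrow> (parent ^^ i') a \<noteq> (parent ^^ j') b"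
    and long: "2 \<le> i + j"
  shows "has_cycle n E"
proof -
  have a: "a < n" and b: "b < n" using edge_less[OF edge] by auto
  define A where "A k = (parent ^^ k) a" for k
  define B where "B k = (parent ^^ k) b" for k
  \<comment> \<open>the cycle climbs from \<open>a\<close> to the meeting point and descends to \<open>b\<close>\<close>
  define f where "f k = (if k \<le> i then A k else B (i + j - k))" for k
  have f_up: "f k = B (i + j - k)" if "i \<le> k" for k
    using that meet by (cases "k = i") (simp_all add: f_def A_def B_def)
  have A: "A k < n" "depth (A k) = depth a - k" if "k \<le> i" for k
    using ancestor_depth[OF a, of k] that i by (simp_all add: A_def)
  have B: "B m < n" "depth (B m) = depth b - m" if "m \<le> j" for m
    using ancestor_depth[OF b, of m] that j by (simp_all add: B_def)
  have distinct: "f k \<noteq> f k'" if "k < k'" "k' \<le> i + j" for k k'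
  proof (cases "k' \<le> i")
    case True
    then have "depth (f k) \<noteq> depth (f k')" using that i A[of k] A[of k'] by (simp add: f_def)
    then show ?thesis by metis
  next
    case k': False
    show ?thesis
    proof (cases "i \<le> k")
      case True
      then have "depth (f k) \<noteq> depth (f k')"
        using that j B[of "i + j - k"] B[of "i + j - k'"] f_up[of k] f_up[of k'] by simp
      then show ?thesis by metis
    next
      case False
      then show ?thesis
        using first[of k "i + j - k'"] that k' j by (simp add: f_def A_def B_def)
    qed
  qed
  show ?thesis
  proof (rule has_cycleI[of "Suc (i + j)" f])
    show "3 \<le> Suc (i + j)" using long by simp
    show "inj_on f {0..<Suc (i + j)}"
      by (rule inj_onI) (metis atLeastLessThan_iff distinct less_Suc_eq_le linorder_neqE_nat)
    show "f ` {0..<Suc (i + j)} \<subseteq> {0..<n}"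
      using A B f_up by (auto simp: f_def)
    show "E (f k) (f (Suc k))" if "Suc k < Suc (i + j)" for k
    proof (cases "k < i")
      case True
      then have "E (A (Suc k)) (A k)" using ancestor_edge[OF a, of k] i by (simp add: A_def)
      then show ?thesis using True edge_sym by (simp add: f_def)
    next
      case False
      then have "i + j - k = Suc (i + j - Suc k)" using that by simp
      then have "E (B (i + j - k)) (B (i + j - Suc k))"
        using ancestor_edge[OF b, of "i + j - Suc k"] False j that by (simp add: B_def)
      then show ?thesis using False f_up[of k] f_up[of "Suc k"] by simp
    qed
    show "E (f (Suc (i + j) - 1)) (f 0)"
      using f_up[of "i + j"] edge edge_sym by (simp add: f_def A_def B_def)
  qed
qed

lemma edge_parent_or_child:
  assumes edge: "E a b"
  shows "(b \<noteq> 0 \<and> a = parent b) \<or> (a \<noteq> 0 \<and> b = parent a)"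
proof (rule ccontr)
  assume not_tree_edge: "\<not> ?thesis"
  have a: "a < n" and b: "b < n" using edge_less[OF edge] by auto
  define meets where "meets i \<longleftrightarrow> (\<exists>j \<le> depth b. (parent ^^ i) a = (parent ^^ j) b)" for i
  have "meets (depth a)"
    unfolding meets_def using ancestor_root[OF a] ancestor_root[OF b] by auto
  define i where "i = (LEAST i. meets i)"
  have "meets i" unfolding i_def by (rule LeastI) fact
  then obtain j where j: "j \<le> depth b" "(parent ^^ i) a = (parent ^^ j) b"
    unfolding meets_def by blast
  have i: "i \<le> depth a" unfolding i_def by (rule Least_le) fact
  have first: "(parent ^^ i') a \<noteq> (parent ^^ j') b" if "i' < i" "j' \<le> depth b" for i' j'
    using not_less_Least[of i' meets] that unfolding i_def meets_def by blast
  have "2 \<le> i + j"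
  proof (rule ccontr)
    assume "\<not> 2 \<le> i + j"
    then consider "i = 0" "j = 0" | "i = 0" "j = 1" | "i = 1" "j = 0" by linarith
    then show False
    proof cases
      case 1
      then show False using j edge edge_irrefl by simp
    next
      case 2
      then show False using j not_tree_edge depth_pos_imp_nonzero[of b] by simp
    next
      case 3
      then show False using i j not_tree_edge depth_pos_imp_nonzero[of a] by simp
    qed
  qed
  then show False using cycle_through_ancestors[OF edge i j(1,2) first] acyclic by blast
qed

definition children :: "nat \<Rightarrow> nat set" where
  "children u = {w. w < n \<and> w \<noteq> 0 \<and> parent w = u}"

lemma finite_children: "finite (children u)"
  unfolding children_def by simp

lemma childD: "w \<in> children u \<Longrightarrow> w < n \<and> w \<noteq> 0 \<and> parent w = u"
  unfolding children_def by simp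

lemma depth_child: "w \<in> children u \<Longrightarrow> depth w = Suc (depth u)"
  using childD depth_parent by blast

lemma neighbours_eq:
  assumes u: "u < n"
  shows "neighbours n E u = (if u = 0 then {} else {parent u}) \<union> children u"
proof
  show "neighbours n E u \<subseteq> (if u = 0 then {} else {parent u}) \<union> children u"
  proof
    fix w assume "w \<in> neighbours n E u"
    then have "E u w" unfolding neighbours_def by simp
    then show "w \<in> (if u = 0 then {} else {parent u}) \<union> children u"
      using edge_parent_or_child[of u w] edge_less unfolding children_def by auto
  qed
  show "(if u = 0 then {} else {parent u}) \<union> children u \<subseteq> neighbours n E u"
  proof
    fix w assume w: "w \<in> (if u = 0 then {} else {parent u}) \<union> children u"
    show "w \<in> neighbours n E u"
    proof (cases "w \<in> children u")
      case True
      then show ?thesis using childD[of w u] parent_edge[of w] unfolding neighbours_def by simp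
    next
      case False
      then have "u \<noteq> 0" "w = parent u" using w by (simp_all split: if_splits)
      then show ?thesis
        using parent_edge[OF u] parent_less[OF u] edge_sym unfolding neighbours_def by simp
    qed
  qed
qed

lemma sum_neighbours:
  assumes u: "u < n"
  shows "(\<Sum>w \<in> neighbours n E u. f w)
    = (if u = 0 then 0 else f (parent u)) + (\<Sum>w \<in> children u. f w)"
proof -
  have "u \<noteq> 0 \<Longrightarrow> parent u \<notin> children u" using depth_child depth_parent[OF u] by force
  then show ?thesis using neighbours_eq[OF u] finite_children by simp
qed

lemma card_neighbours:
  assumes u: "u < n"
  shows "card (neighbours n E u) = (if u = 0 then 0 else 1) + card (children u)"
  using sum_neighbours[OF u, of "\<lambda>_. 1 :: nat"] by simp

section \<open>Eigenfunctions vanishing on a forcing set\<close>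

definition leaf :: "nat \<Rightarrow> bool" where
  "leaf w \<longleftrightarrow> children w = {}"

definition light :: "nat \<Rightarrow> bool" where
  "light w \<longleftrightarrow> leaf w \<or> (\<exists>g. children w = {g} \<and> leaf g)"

definition heavy :: "nat \<Rightarrow> bool" where
  "heavy w \<longleftrightarrow> w < n \<and> w \<noteq> 0 \<and> \<not> light w"

lemma laplacian_eigenfunctionD:
  "laplacian_eigenfunction n E \<mu> v \<Longrightarrow> u < n \<Longrightarrow>
     of_nat (card (neighbours n E u)) * v u - (\<Sum>w \<in> neighbours n E u. v w) = \<mu> * v u"
  unfolding laplacian_eigenfunction_def by blast

lemma eigenfunction_light_vanishes:
  fixes v :: "nat \<Rightarrow> 'a :: field"
  assumes eig: "laplacian_eigenfunction n E \<mu> v" and \<mu>1: "\<mu> \<noteq> 1" and \<mu>2: "\<mu>\<^sup>2 - 3 * \<mu> + 1 \<noteq> 0"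
    and c: "c < n" "c \<noteq> 0" "light c" and parent_zero: "v (parent c) = 0"
  shows "v c = 0"
proof -
  consider "leaf c" | g where "children c = {g}" "leaf g" using c(3) unfolding light_def by blast
  then show ?thesis
  proof cases
    case 1
    then have "v c - v (parent c) = \<mu> * v c"
      using laplacian_eigenfunctionD[OF eig c(1)] sum_neighbours[OF c(1), of v]
        card_neighbours[OF c(1)] c(2)
      by (simp add: leaf_def)
    then have "(1 - \<mu>) * v c = 0" using parent_zero by (simp add: algebra_simps)
    then show ?thesis using \<mu>1 by simp
  next
    case 2
    then have g: "g < n" "g \<noteq> 0" "parent g = c" using childD[of g c] by auto
    then have "v g - v c = \<mu> * v g"
      using laplacian_eigenfunctionD[OF eig g(1)] sum_neighbours[OF g(1), of v]
        card_neighbours[OF g(1)] 2(2)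
      by (simp add: leaf_def)
    then have vc: "v c = (1 - \<mu>) * v g" by (simp add: algebra_simps)
    have "2 * v c - (v (parent c) + v g) = \<mu> * v c"
      using laplacian_eigenfunctionD[OF eig c(1)] sum_neighbours[OF c(1), of v]
        card_neighbours[OF c(1)] c(2) 2(1)
      by simp
    then have "2 * ((1 - \<mu>) * v g) - v g = \<mu> * ((1 - \<mu>) * v g)" using vc parent_zero by simp
    then have "(\<mu>\<^sup>2 - 3 * \<mu> + 1) * v g = 0" by (simp add: algebra_simps power2_eq_square)
    then show ?thesis using vc \<mu>2 by simp
  qed
qed

lemma eigenfunction_children_sum:
  assumes eig: "laplacian_eigenfunction n E \<mu> v" and u: "u < n"
    and "v u = 0" and "u \<noteq> 0 \<Longrightarrow> v (parent u) = 0"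
  shows "(\<Sum>w \<in> children u. v w) = 0"
  using laplacian_eigenfunctionD[OF eig u] sum_neighbours[OF u, of v] assms(3,4)
  by (cases "u = 0") simp_all

definition forcing_set :: "nat set \<Rightarrow> bool" where
  "forcing_set R \<longleftrightarrow> R \<subseteq> {0..<n} \<and> 0 \<in> R \<and>
     (\<forall>u. \<forall>w \<in> children u. \<forall>w' \<in> children u. heavy w \<longrightarrow> heavy w' \<longrightarrow> w \<notin> R \<longrightarrow> w' \<notin> R \<longrightarrow> w = w')"

lemma eigenfunction_vanishes:
  fixes v :: "nat \<Rightarrow> 'a :: field"
  assumes eig: "laplacian_eigenfunction n E \<mu> v" and \<mu>1: "\<mu> \<noteq> 1" and \<mu>2: "\<mu>\<^sup>2 - 3 * \<mu> + 1 \<noteq> 0"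
    and R: "forcing_set R" and zero_on_R: "\<And>i. i \<in> R \<Longrightarrow> v i = 0" and x: "x < n"
  shows "v x = 0"
  using x
proof (induction "depth x" arbitrary: x rule: less_induct)
  case less
  show ?case
  proof (cases "x = 0")
    case True
    then show ?thesis using R zero_on_R unfolding forcing_set_def by blast
  next
    case x0: False
    define u where "u = parent x"
    have x_child: "x \<in> children u" using less.prems x0 by (simp add: children_def u_def)
    have u: "u < n" using parent_less[OF less.prems x0] by (simp add: u_def)
    have depth_u: "depth u < depth x" using depth_parent[OF less.prems x0] by (simp add: u_def)
    have vu: "v u = 0" using less.hyps[OF depth_u u] .
    have "v (parent u) = 0" if "u \<noteq> 0"
      using less.hyps[of "parent u"] depth_parent[OF u that] parent_less[OF u that] depth_u by simp
    \<comment> \<open>the eigen-equation at \<open>u\<close> makes the children of \<open>u\<close> sum to zero,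
      and all of them but \<open>x\<close> are known to vanish\<close>
    then have sum_zero: "(\<Sum>w \<in> children u. v w) = 0"
      using eigenfunction_children_sum[OF eig u vu] by blast
    have light_zero: "v w = 0" if "w \<in> children u" "light w" for w
      using eigenfunction_light_vanishes[OF eig \<mu>1 \<mu>2, of w] childD[OF that(1)] that(2) vu by simp
    show ?thesis
    proof (cases "light x \<or> x \<in> R")
      case True
      then show ?thesis using light_zero[OF x_child] zero_on_R by blast
    next
      case False
      then have "heavy x" using less.prems x0 unfolding heavy_def by simp
      have "v w = 0" if w: "w \<in> children u - {x}" for w
      proof (cases "light w \<or> w \<in> R")
        case True
        then show ?thesis using light_zero zero_on_R w by blast
      next
        case False
        then have "heavy w" using childD[of w u] w unfolding heavy_def by simp
        then show ?thesis
          using R \<open>heavy x\<close> \<open>\<not> (light x \<or> x \<in> R)\<close> False x_child w unfolding forcing_set_def by blast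
      qed
      then have "(\<Sum>w \<in> children u. v w) = v x"
        using sum.remove[OF finite_children x_child, of v] by simp
      then show ?thesis using sum_zero by simp
    qed
  qed
qed

section \<open>Counting heavy vertices\<close>

definition minimal_heavy :: "nat set" where
  "minimal_heavy = {z. heavy z \<and> (\<forall>c \<in> children z. \<not> heavy c)}"

lemma finite_heavy: "finite {w. heavy w}"
  by (rule finite_subset[of _ "{0..<n}"]) (auto simp: heavy_def)

lemma finite_minimal_heavy: "finite minimal_heavy"
  using finite_heavy by (rule finite_subset[rotated]) (auto simp: minimal_heavy_def)

lemma exists_small_forcing_set: "\<exists>R. forcing_set R \<and> card R \<le> Suc (card minimal_heavy)"
proof -
  define K where "K = {u. u < n \<and> (\<exists>w \<in> children u. heavy w)}"
  define pick where "pick u = (SOME w. w \<in> children u \<and> heavy w)" for u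
  have pick: "pick u \<in> children u \<and> heavy (pick u)" if "u \<in> K" for u
  proof -
    have "\<exists>w. w \<in> children u \<and> heavy w" using that unfolding K_def by blast
    then show ?thesis unfolding pick_def by (rule someI_ex)
  qed
  have owner: "u = u'" if "u \<in> K" "pick u \<in> children u'" for u u'
    using childD[of "pick u" u] childD[of "pick u" u'] pick[OF that(1)] that(2) by simp
  define R where "R = insert 0 ({w. heavy w} - pick ` K)"
  have "forcing_set R"
    unfolding forcing_set_def
  proof (intro conjI allI ballI impI)
    show "R \<subseteq> {0..<n}" using root_vertex by (auto simp: R_def heavy_def)
    show "0 \<in> R" by (simp add: R_def)
    fix u w w' assume w: "w \<in> children u" "w' \<in> children u" "heavy w" "heavy w'" "w \<notin> R" "w' \<notin> R"
    then have "w \<in> pick ` K" "w' \<in> pick ` K" by (auto simp: R_def)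
    then obtain a a' where "a \<in> K" "w = pick a" "a' \<in> K" "w' = pick a'" by blast
    then show "w = w'" using owner[of a u] owner[of a' u] w(1,2) by simp
  qed
  moreover have "card R \<le> Suc (card minimal_heavy)"
  proof -
    have inj: "inj_on pick K"
      by (rule inj_onI) (use owner pick in metis)
    have "finite K" by (rule finite_subset[of _ "{0..<n}"]) (auto simp: K_def)
    have sub: "pick ` K \<subseteq> {w. heavy w}" using pick by blast
    have "{w. heavy w} \<subseteq> minimal_heavy \<union> K"
      unfolding minimal_heavy_def K_def heavy_def by auto
    then have "card {w. heavy w} \<le> card (minimal_heavy \<union> K)"
      using finite_minimal_heavy \<open>finite K\<close> by (intro card_mono) simp_all
    then have "card {w. heavy w} \<le> card minimal_heavy + card K"
      using card_Un_le[of minimal_heavy K] by linarith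
    moreover have "card ({w. heavy w} - pick ` K) = card {w. heavy w} - card K"
      using card_Diff_subset[OF finite_subset[OF sub finite_heavy] sub] card_image[OF inj] by simp
    moreover have "card R \<le> Suc (card ({w. heavy w} - pick ` K))"
      unfolding R_def using finite_heavy by (simp add: card_insert_if)
    ultimately show ?thesis by linarith
  qed
  ultimately show ?thesis by blast
qed

definition two_level_subtree :: "nat \<Rightarrow> nat set" where
  "two_level_subtree z = insert z (children z \<union> (\<Union>c \<in> children z. children c))"

lemma minimal_heavy_child_light: "z \<in> minimal_heavy \<Longrightarrow> c \<in> children z \<Longrightarrow> light c"
  using childD[of c z] unfolding minimal_heavy_def heavy_def by blast

lemma light_child_leaf: "light c \<Longrightarrow> w \<in> children c \<Longrightarrow> leaf w"
  unfolding light_def leaf_def by auto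

lemma heavy_not_leaf: "heavy w \<Longrightarrow> \<not> leaf w"
  unfolding heavy_def light_def by blast

lemma two_level_subtree_subset: "z \<in> minimal_heavy \<Longrightarrow> two_level_subtree z \<subseteq> {1..<n}"
  unfolding two_level_subtree_def minimal_heavy_def heavy_def children_def by auto

lemma card_two_level_subtree:
  assumes z: "z \<in> minimal_heavy"
  shows "3 \<le> card (two_level_subtree z)"
proof -
  have heavy: "heavy z" using z by (simp add: minimal_heavy_def)
  then obtain a where a: "a \<in> children z" using heavy_not_leaf unfolding leaf_def by blast
  obtain b where b: "b \<in> children z \<or> b \<in> children a" "b \<noteq> a"
  proof (cases "children z = {a}")
    case True
    then have "\<not> leaf a" using heavy unfolding heavy_def light_def by blast
    then obtain b where "b \<in> children a" unfolding leaf_def by blast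
    then show ?thesis using that depth_child[of b a] by force
  next
    case False
    then show ?thesis using that a by blast
  qed
  have sub: "{z, a, b} \<subseteq> two_level_subtree z" using a b(1) by (auto simp: two_level_subtree_def)
  have depth_a: "depth a = Suc (depth z)" by (rule depth_child[OF a])
  have "depth z < depth b"
    using b(1) depth_child[of b z] depth_child[of b a] depth_a by (elim disjE) simp_all
  then have "z \<noteq> b" by auto
  moreover have "z \<noteq> a" using depth_a by auto
  ultimately have "card {z, a, b} = 3" using b(2) by simp
  moreover have "finite (two_level_subtree z)"
    using two_level_subtree_subset[OF z] by (rule finite_subset) simp
  ultimately show ?thesis using card_mono[OF _ sub] by simp
qed

lemma two_level_subtree_cases:
  assumes z: "z \<in> minimal_heavy" and x: "x \<in> two_level_subtree z"
  obtains "x = z" "heavy x"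
    | "\<not> heavy x" "parent x = z" "heavy (parent x)"
    | "\<not> heavy x" "\<not> heavy (parent x)" "parent (parent x) = z"
proof -
  have heavy: "heavy z" using z by (simp add: minimal_heavy_def)
  consider "x = z" | "x \<in> children z" | c where "c \<in> children z" "x \<in> children c"
    using x unfolding two_level_subtree_def by blast
  then show ?thesis
  proof cases
    case 1
    then show ?thesis using that(1) heavy by simp
  next
    case 2
    then show ?thesis
      using that(2) heavy minimal_heavy_child_light[OF z] childD[of x z]
      unfolding heavy_def by blast
  next
    case 3
    then have "light c" "leaf x" using minimal_heavy_child_light[OF z] light_child_leaf by blast+
    then show ?thesis
      using that(3) 3 childD[of x c] childD[of c z] heavy_not_leaf unfolding heavy_def by blast
  qed
qed

lemma two_level_subtree_disjoint:
  assumes z: "z \<in> minimal_heavy" and z': "z' \<in> minimal_heavy"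
    and x: "x \<in> two_level_subtree z" "x \<in> two_level_subtree z'"
  shows "z = z'"
  by (rule two_level_subtree_cases[OF z x(1)]; rule two_level_subtree_cases[OF z' x(2)]) auto

lemma card_minimal_heavy: "3 * card minimal_heavy \<le> n - 1"
proof -
  have finite: "finite (two_level_subtree z)" if "z \<in> minimal_heavy" for z
    using two_level_subtree_subset[OF that] by (rule finite_subset) simp
  have "3 * card minimal_heavy = (\<Sum>z \<in> minimal_heavy. 3)" by simp
  also have "\<dots> \<le> (\<Sum>z \<in> minimal_heavy. card (two_level_subtree z))"
    using card_two_level_subtree by (rule sum_mono)
  also have "\<dots> = card (\<Union>z \<in> minimal_heavy. two_level_subtree z)"
    using finite_minimal_heavy finite two_level_subtree_disjoint
    by (intro card_UN_disjoint[symmetric]) blast+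
  also have "\<dots> \<le> card {1..<n}"
    using two_level_subtree_subset by (intro card_mono) auto
  finally show ?thesis by simp
qed

end

lemma (in rooted_tree) kernel_dim_laplacian_le:
  fixes \<mu> :: real
  assumes \<mu>1: "\<mu> \<noteq> 1" and \<mu>2: "\<mu>\<^sup>2 - 3 * \<mu> + 1 \<noteq> 0"
  shows "kernel_dim (char_matrix (map_mat complex_of_real (laplacian n E)) (of_real \<mu>))
    \<le> Suc (card minimal_heavy)"
proof -
  obtain R where R: "forcing_set R" "card R \<le> Suc (card minimal_heavy)"
    using exists_small_forcing_set by blast
  have C: "char_matrix (map_mat complex_of_real (laplacian n E)) (of_real \<mu>) \<in> carrier_mat n n"
    using laplacian_carrier[of n E] by simp
  have "kernel_dim (char_matrix (map_mat complex_of_real (laplacian n E)) (of_real \<mu>)) \<le> card R"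
  proof (rule kernel_dim_le_card[OF C])
    show "R \<subseteq> {0..<n}" using R(1) by (simp add: forcing_set_def)
    fix v
    assume v: "v \<in> mat_kernel (char_matrix (map_mat complex_of_real (laplacian n E)) (of_real \<mu>))"
      and zero_on_R: "\<forall>i \<in> R. v $ i = 0"
    have "complex_of_real \<mu> \<noteq> 1" using \<mu>1 by simp
    moreover have "(complex_of_real \<mu>)\<^sup>2 - 3 * complex_of_real \<mu> + 1 \<noteq> 0"
      using \<mu>2 of_real_eq_0_iff[of "\<mu>\<^sup>2 - 3 * \<mu> + 1", where 'a = complex] by simp
    ultimately have "v $ i = 0" if "i < n" for i
      using eigenfunction_vanishes[OF laplacian_kernel_eigenfunction[OF v] _ _ R(1)] zero_on_R that
      by blast
    moreover have "v \<in> carrier_vec n" by (rule mat_kernelD(1)[OF C v])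
    ultimately show "v = 0\<^sub>v n" by (intro eq_vecI) auto
  qed
  then show ?thesis using R(2) by simp
qed

lemma golden_roots:
  fixes \<mu> :: real
  assumes "\<mu>\<^sup>2 - 3 * \<mu> + 1 = 0"
  shows "\<mu> = (3 + sqrt 5) / 2 \<or> \<mu> = (3 - sqrt 5) / 2"
proof -
  have "(\<mu> - (3 + sqrt 5) / 2) * (\<mu> - (3 - sqrt 5) / 2) = \<mu>\<^sup>2 - 3 * \<mu> + (9 - sqrt 5 * sqrt 5) / 4"
    by (simp add: algebra_simps power2_eq_square add_divide_distrib diff_divide_distrib)
  also have "\<dots> = 0" using assms by simp
  finally show ?thesis by simp
qed

theorem lemma4p3:
  fixes j n :: nat and E :: "nat \<Rightarrow> nat \<Rightarrow> bool" and \<mu> :: real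
  assumes "j \<ge> 2"
    and "is_tree n E"
    and "n > 10 * j"
    and "eigenvalue (laplacian n E) \<mu>"
    and "\<mu> \<noteq> 1"
    and "lap_mult n E \<mu> = n div 2 - j"
  shows "\<mu> = (3 + sqrt 5) / 2 \<or> \<mu> = (3 - sqrt 5) / 2"
proof (rule ccontr)
  assume "\<not> ?thesis"
  then have \<mu>2: "\<mu>\<^sup>2 - 3 * \<mu> + 1 \<noteq> 0" using golden_roots by blast
  interpret rooted_tree n E using assms(2,3) by unfold_locales simp_all
  have "lap_mult n E \<mu>
      \<le> kernel_dim (char_matrix (map_mat complex_of_real (laplacian n E)) (of_real \<mu>))"
    unfolding lap_mult_def
    by (rule order_char_poly_le_kernel_dim_symmetric[OF laplacian_carrier laplacian_symmetric])
      (rule edge_sym)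
  also have "\<dots> \<le> Suc (card minimal_heavy)" by (rule kernel_dim_laplacian_le[OF assms(5) \<mu>2])
  finally have "n div 2 - j \<le> Suc (card minimal_heavy)" using assms(6) by simp
  then show False using card_minimal_heavy assms(1,3) by linarith
qed

end
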